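(* Assume the following statement holds: for every base $b>2$, every integer $n$ with $1<n<b$, and every symmetric $(n,b)$-palintiple with carries $c_k,\ldots,c_0$, one has $c_j\equiv 0 \pmod{n-1}$ for all $0\le j\le k$. Then, for integers $b>2$ and $1<n<b$, any two $(n,b)$-palintiples belong to the same class: either both are symmetric, or both are shifted-symmetric, or both are asymmetric.
   Context: Let $b>2$ be an integer base and write $(d_k,d_{k-1},\ldots,d_0)_b=\sum_{j=0}^k d_j b^j$ with $0\le d_j<b$. A natural number $p=(d_k,\ldots,d_0)_b$ with $d_k\neq 0$ and $d_0\neq 0$ that is not a base-$b$ palindrome is an $(n,b)$-palintiple if $(d_k,\ldots,d_0)_b=n\,(d_0,d_1,\ldots,d_k)_b$ for an integer $n$ with $1<n<b$. Its carries $c_0,\ldots,c_{k+1}$ are the carries arising in the base-$b$ multiplication of $(d_0,\ldots,d_k)_b$ by $n$: $c_0=0$ and $n d_{k-j}+c_j=d_j+b\,c_{j+1}$ for $0\le j\le k$ (so $c_{k+1}=0$). The palintiple is symmetric if $c_j=c_{k-j}$ for all $0\le j\le k$, shifted-symmetric if $c_j=c_{k-j+1}$ for all $0\le j\le k$, and asymmetric if it is neither symmetric nor shifted-symmetric. *)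

theory Defs
  imports Main "HOL-Number_Theory.Cong"
begin

definition digit :: "nat \<Rightarrow> nat \<Rightarrow> nat \<Rightarrow> nat" where
  "digit b p j = (p div b ^ j) mod b"

definition topidx :: "nat \<Rightarrow> nat \<Rightarrow> nat" where
  "topidx b p = (LEAST k. p < b ^ Suc k)"

definition revnum :: "nat \<Rightarrow> nat \<Rightarrow> nat" where
  "revnum b p = (\<Sum>j\<le>topidx b p. digit b p (topidx b p - j) * b ^ j)"

definition palindrome :: "nat \<Rightarrow> nat \<Rightarrow> bool" where
  "palindrome b p \<longleftrightarrow> (\<forall>j\<le>topidx b p. digit b p j = digit b p (topidx b p - j))"

definition palintiple :: "nat \<Rightarrow> nat \<Rightarrow> nat \<Rightarrow> bool" where
  "palintiple n b p \<longleftrightarrow> 1 < n \<and> n < b \<and> 0 < p \<and>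
     digit b p (topidx b p) \<noteq> 0 \<and> digit b p 0 \<noteq> 0 \<and>
     \<not> palindrome b p \<and> p = n * revnum b p"

text \<open>Carries of the base-b multiplication of (d_0,...,d_k)_b by n:
  c_0 = 0, c_(j+1) = (n d_(k-j) + c_j) div b.\<close>
fun carry :: "nat \<Rightarrow> nat \<Rightarrow> nat \<Rightarrow> nat \<Rightarrow> nat" where
  "carry n b p 0 = 0"
| "carry n b p (Suc j) = (n * digit b p (topidx b p - j) + carry n b p j) div b"

definition symmetric_pal :: "nat \<Rightarrow> nat \<Rightarrow> nat \<Rightarrow> bool" where
  "symmetric_pal n b p \<longleftrightarrow>
     (\<forall>j\<le>topidx b p. carry n b p j = carry n b p (topidx b p - j))"

definition shifted_symmetric_pal :: "nat \<Rightarrow> nat \<Rightarrow> nat \<Rightarrow> bool" where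
  "shifted_symmetric_pal n b p \<longleftrightarrow>
     (\<forall>j\<le>topidx b p. carry n b p j = carry n b p (topidx b p - j + 1))"

definition asymmetric_pal :: "nat \<Rightarrow> nat \<Rightarrow> nat \<Rightarrow> bool" where
  "asymmetric_pal n b p \<longleftrightarrow> \<not> symmetric_pal n b p \<and> \<not> shifted_symmetric_pal n b p"

end

theory Submission
  imports Defs
begin

text \<open>
  Let p = n rev(p) be a palintiple with digits d_j and carries c_j. Schoolbook multiplication
  gives n d_(k-j) + c_j = d_j + b c_(j+1), and combining the equations for j and k - j yields
  (n^2 - 1) d_j = b c_(j+1) + n b c_(k-j+1) - n c_(k-j) - c_j.
  Both kinds of symmetry turn out to depend on (n, b) only. If n + 1 divides b, then
  c_j and c_(k-j) are congruent modulo n + 1 and both below n, so every palintiple is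
  symmetric; conversely, for a symmetric one the assumed congruence forces c_1 = n - 1 and
  hence b = (n + 1) d_0. A shifted-symmetric palintiple yields (n^2 - 1) | (b - n) c for some
  0 < c < n; as n^2 - 1 is coprime to n and exceeds (n - 1)^2, this divisibility propagates
  c_(j+1) = c_(k-j) by induction through the carries of any other palintiple.
\<close>

definition rev_low :: "nat \<Rightarrow> nat \<Rightarrow> nat \<Rightarrow> nat" where
  "rev_low b p j = (\<Sum>i<j. digit b p (topidx b p - i) * b ^ i)"

lemma revnum_eq_rev_low: "revnum b p = rev_low b p (Suc (topidx b p))"
  unfolding revnum_def rev_low_def by (simp add: lessThan_Suc_atMost)

lemma rev_low_mod_power:
  assumes "j \<le> m"
  shows "rev_low b p m mod b ^ j = rev_low b p j mod b ^ j"
  using assms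
proof (induction m rule: dec_induct)
  case (step m)
  obtain t where "b ^ m = b ^ j * t"
    using le_imp_power_dvd[OF \<open>j \<le> m\<close>] by blast
  then have "rev_low b p (Suc m) = rev_low b p m + b ^ j * (digit b p (topidx b p - m) * t)"
    by (simp add: rev_low_def)
  then show ?case
    using step.IH by simp
qed simp

\<comment> \<open>Keep \<open>carry n b p (Suc j)\<close> folded: the digit equations below are stated in terms of it.\<close>
declare carry.simps(2) [simp del]

lemma carry_eq_div:
  assumes "0 < b"
  shows "carry n b p j = n * rev_low b p j div b ^ j"
proof (induction j)
  case (Suc j)
  let ?d = "digit b p (topidx b p - j)"
  have "carry n b p (Suc j) = (n * ?d + carry n b p j) div b"
    by (simp add: carry.simps(2))
  also have "\<dots> = (n * rev_low b p j + n * ?d * b ^ j) div b ^ j div b"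
    using assms Suc.IH by simp
  also have "\<dots> = n * rev_low b p (Suc j) div b ^ j div b"
    by (simp add: rev_low_def algebra_simps)
  also have "\<dots> = n * rev_low b p (Suc j) div b ^ Suc j"
    by (simp add: div_mult2_eq power_Suc2 del: power_Suc)
  finally show ?case .
qed (simp add: rev_low_def)

lemma carry_less:
  assumes "1 < b" "0 < n"
  shows "carry n b p j < n"
proof (induction j)
  case (Suc j)
  have "digit b p (topidx b p - j) < b"
    using assms unfolding digit_def by simp
  have "n * digit b p (topidx b p - j) + carry n b p j < n * (digit b p (topidx b p - j) + 1)"
    using Suc.IH by simp
  also have "\<dots> \<le> n * b"
    using \<open>digit b p (topidx b p - j) < b\<close> by (intro mult_le_mono2) simp
  finally show ?case
    by (simp add: carry.simps(2) less_mult_imp_div_less)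
qed (use assms in simp)

lemma less_power_Suc_topidx:
  assumes "1 < b"
  shows "p < b ^ Suc (topidx b p)"
  unfolding topidx_def
proof (rule LeastI)
  have "p < 2 ^ p" by (rule less_exp)
  also have "\<dots> \<le> b ^ p"
    using assms by (simp add: power_mono)
  also have "\<dots> \<le> b ^ Suc p"
    using assms by simp
  finally show "p < b ^ Suc p" .
qed

lemma mod_power_Suc_eq: "p mod b ^ Suc j = digit b p j * b ^ j + p mod b ^ j"
  using mod_mult2_eq[of p "b ^ j" b] by (simp add: digit_def mult.commute)

lemma mult_rev_low_eq:
  assumes p: "p = n * revnum b p" and b: "1 < b" and j: "j \<le> Suc (topidx b p)"
  shows "n * rev_low b p j = p mod b ^ j + carry n b p j * b ^ j"
proof -
  have "n * rev_low b p j mod b ^ j = n * revnum b p mod b ^ j"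
    using rev_low_mod_power[OF j] by (metis mod_mult_right_eq revnum_eq_rev_low)
  then show ?thesis
    using p b carry_eq_div[of b n p j] by (metis div_mult_mod_eq add.commute zero_less_one less_trans)
qed

lemma carry_Suc_topidx:
  assumes p: "p = n * revnum b p" and b: "1 < b"
  shows "carry n b p (Suc (topidx b p)) = 0"
proof -
  have "carry n b p (Suc (topidx b p)) = n * revnum b p div b ^ Suc (topidx b p)"
    using carry_eq_div[of b n p] b by (simp add: revnum_eq_rev_low)
  also have "\<dots> = p div b ^ Suc (topidx b p)"
    by (simp only: p[symmetric])
  also have "\<dots> = 0"
    using less_power_Suc_topidx[OF b] by simp
  finally show ?thesis .
qed

lemma carry_digit_eq:
  assumes p: "p = n * revnum b p" and b: "1 < b" and j: "j \<le> topidx b p"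
  shows "n * digit b p (topidx b p - j) + carry n b p j = digit b p j + b * carry n b p (Suc j)"
proof -
  have "(digit b p j + b * carry n b p (Suc j)) * b ^ j + p mod b ^ j
      = n * rev_low b p (Suc j)"
    using mult_rev_low_eq[OF p b, of "Suc j"] j mod_power_Suc_eq[of p b j]
    by (simp add: algebra_simps)
  also have "\<dots> = (n * digit b p (topidx b p - j) + carry n b p j) * b ^ j + p mod b ^ j"
    using mult_rev_low_eq[OF p b, of j] j by (simp add: rev_low_def algebra_simps)
  finally have "(digit b p j + b * carry n b p (Suc j)) * b ^ j
      = (n * digit b p (topidx b p - j) + carry n b p j) * b ^ j"
    by (rule add_right_imp_eq)
  then show ?thesis
    using b by (metis mult_right_cancel power_not_zero not_one_less_zero)
qed

lemma palintiple_eq_mult_revnum: "palintiple n b p \<Longrightarrow> p = n * revnum b p"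
  unfolding palintiple_def by blast

lemma palintiple_multiplier_gt_1: "palintiple n b p \<Longrightarrow> 1 < n"
  unfolding palintiple_def by blast

lemma palintiple_base_gt_1: "palintiple n b p \<Longrightarrow> 1 < b"
  unfolding palintiple_def by (meson less_trans)

lemma palintiple_topidx_pos:
  assumes "palintiple n b p"
  shows "0 < topidx b p"
proof (rule ccontr)
  assume "\<not> 0 < topidx b p"
  then have "palindrome b p"
    unfolding palindrome_def by simp
  with assms show False
    unfolding palintiple_def by blast
qed

lemma palintiple_carry_less:
  assumes "palintiple n b p"
  shows "carry n b p j < n"
  using carry_less[OF palintiple_base_gt_1[OF assms]] palintiple_multiplier_gt_1[OF assms] by simp

lemma palintiple_carry_Suc_topidx:
  assumes "palintiple n b p"
  shows "carry n b p (Suc (topidx b p)) = 0"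
  using carry_Suc_topidx[OF palintiple_eq_mult_revnum[OF assms] palintiple_base_gt_1[OF assms]] .

lemma palintiple_carry_digit_eq:
  assumes P: "palintiple n b p" and j: "j \<le> topidx b p"
  shows "int n * int (digit b p (topidx b p - j)) + int (carry n b p j)
       = int (digit b p j) + int b * int (carry n b p (Suc j))"
proof -
  from carry_digit_eq[OF palintiple_eq_mult_revnum[OF P] palintiple_base_gt_1[OF P] j]
  show ?thesis
    by (metis of_nat_add of_nat_mult)
qed

lemma palintiple_carry_digit_eq_mirror:
  assumes P: "palintiple n b p" and j: "j \<le> topidx b p"
  shows "int n * int (digit b p j) + int (carry n b p (topidx b p - j))
       = int (digit b p (topidx b p - j)) + int b * int (carry n b p (Suc (topidx b p - j)))"
  using palintiple_carry_digit_eq[OF P, of "topidx b p - j"] j by simp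

lemma palintiple_carry_pair_eq:
  assumes P: "palintiple n b p" and j: "j \<le> topidx b p"
  shows "(int n ^ 2 - 1) * int (digit b p j)
       = int b * int (carry n b p (Suc j)) + int n * int b * int (carry n b p (Suc (topidx b p - j)))
         - int n * int (carry n b p (topidx b p - j)) - int (carry n b p j)"
  using palintiple_carry_digit_eq[OF P j] arg_cong[OF palintiple_carry_digit_eq_mirror[OF P j], of "\<lambda>x. int n * x"]
  by (simp add: algebra_simps power2_eq_square)

lemma eq_0_if_dvd_abs_less:
  fixes d x :: int
  assumes "d dvd x" "\<bar>x\<bar> < d"
  shows "x = 0"
  using dvd_imp_le_int[of x d] assms by auto

lemma symmetric_pal_if_dvd:
  assumes P: "palintiple n b p" and dvd: "(n + 1) dvd b"
  shows "symmetric_pal n b p"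
  unfolding symmetric_pal_def
proof (intro allI impI)
  fix j assume j: "j \<le> topidx b p"
  let ?k = "topidx b p"
  obtain t where "b = (n + 1) * t"
    using dvd by blast
  then have t: "int b = (int n + 1) * int t"
    by (simp add: algebra_simps)
  have "int (carry n b p j) - int (carry n b p (?k - j))
      = (int n + 1) * (int (digit b p j) - int (digit b p (?k - j))
          + int t * (int (carry n b p (Suc j)) - int (carry n b p (Suc (?k - j)))))"
    using palintiple_carry_digit_eq[OF P j] palintiple_carry_digit_eq_mirror[OF P j] t
    by (simp add: algebra_simps)
  then have "(int n + 1) dvd int (carry n b p j) - int (carry n b p (?k - j))"
    by (metis dvd_triv_left)
  moreover have "\<bar>int (carry n b p j) - int (carry n b p (?k - j))\<bar> < int n + 1"
    using palintiple_carry_less[OF P, of j] palintiple_carry_less[OF P, of "?k - j"] by linarith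
  ultimately have "int (carry n b p j) - int (carry n b p (?k - j)) = 0"
    by (rule eq_0_if_dvd_abs_less)
  then show "carry n b p j = carry n b p (?k - j)"
    by simp
qed

lemma sq_minus_1_pos:
  assumes "1 < n"
  shows "(0::int) < int n ^ 2 - 1"
proof -
  have "1 < int n"
    using assms by simp
  then show ?thesis
    by (simp add: power2_eq_square less_1_mult)
qed

lemma b_eq_if_symmetric_pal:
  assumes P: "palintiple n b p" and S: "symmetric_pal n b p"
    and H: "\<forall>j\<le>topidx b p. [carry n b p j = 0] (mod (n - 1))"
  shows "b = (n + 1) * digit b p 0"
proof -
  let ?k = "topidx b p"
  define c where "c = carry n b p 1"
  have n: "1 < n"
    using palintiple_multiplier_gt_1[OF P] .
  have "carry n b p ?k = carry n b p (?k - ?k)"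
    using S unfolding symmetric_pal_def by blast
  then have pair: "(int n ^ 2 - 1) * int (digit b p 0) = int b * int c"
    using palintiple_carry_pair_eq[OF P, of 0] palintiple_carry_Suc_topidx[OF P]
    by (simp add: c_def)
  have "0 < digit b p 0"
    using P unfolding palintiple_def by blast
  then have "c \<noteq> 0"
    using pair sq_minus_1_pos[OF n] by (metis mult_eq_0_iff of_nat_0 of_nat_0_less_iff less_irrefl)
  moreover have "c < n"
    unfolding c_def by (rule palintiple_carry_less[OF P])
  moreover have "c mod (n - 1) = 0"
    using H palintiple_topidx_pos[OF P] unfolding c_def cong_def by simp
  ultimately have "c = n - 1"
    using mod_less[of c "n - 1"] by linarith
  then have "int c = int n - 1"
    using n by simp
  with pair have "(int n - 1) * ((int n + 1) * int (digit b p 0)) = (int n - 1) * int b"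
    by (simp add: algebra_simps power2_eq_square)
  then have "int b = (int n + 1) * int (digit b p 0)"
    using n by simp
  then show ?thesis
    by (metis of_nat_1 of_nat_add of_nat_eq_iff of_nat_mult)
qed

lemma eq_if_sq_minus_1_dvd:
  fixes n b c x y :: int
  assumes dvd_c: "(n ^ 2 - 1) dvd (b - n) * c" and dvd_xy: "(n ^ 2 - 1) dvd b * x - n * y"
    and c: "0 < c" "c < n" and x: "0 \<le> x" "x < n" and y: "0 \<le> y" "y < n"
  shows "x = y"
proof -
  have "(n ^ 2 - 1) dvd (b * x - n * y) * c - ((b - n) * c) * x"
    using dvd_c dvd_xy by simp
  also have "(b * x - n * y) * c - ((b - n) * c) * x = n * (c * (x - y))"
    by (simp add: algebra_simps)
  finally have "(n ^ 2 - 1) dvd n * (c * (x - y))" .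
  moreover have "coprime (n ^ 2 - 1) n"
    using coprime_diff_one_left[of "n * n"] by (simp add: power2_eq_square)
  ultimately have dvd: "(n ^ 2 - 1) dvd c * (x - y)"
    by (simp add: coprime_dvd_mult_right_iff)
  have "\<bar>c * (x - y)\<bar> = c * \<bar>x - y\<bar>"
    using c by (simp add: abs_mult)
  also have "\<dots> \<le> (n - 1) * (n - 1)"
    using c x y by (intro mult_mono) auto
  also have "\<dots> < n ^ 2 - 1"
    using c by (simp add: power2_eq_square algebra_simps)
  finally have "c * (x - y) = 0"
    using dvd by (intro eq_0_if_dvd_abs_less)
  then show ?thesis
    using c by simp
qed

lemma sq_minus_1_dvd_if_shifted_symmetric_pal:
  assumes P: "palintiple n b p" and Sh: "shifted_symmetric_pal n b p"
  obtains c where "0 < c" "c < n" "(int n ^ 2 - 1) dvd (int b - int n) * int c"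
proof
  let ?k = "topidx b p"
  define c where "c = carry n b p 1"
  have "carry n b p ?k = carry n b p (?k - ?k + 1)"
    using Sh unfolding shifted_symmetric_pal_def by blast
  then have pair: "(int n ^ 2 - 1) * int (digit b p 0) = (int b - int n) * int c"
    using palintiple_carry_pair_eq[OF P, of 0] palintiple_carry_Suc_topidx[OF P]
    by (simp add: c_def algebra_simps)
  then show "(int n ^ 2 - 1) dvd (int b - int n) * int c"
    by (metis dvd_triv_left)
  have "0 < digit b p 0"
    using P unfolding palintiple_def by blast
  then show "0 < c"
    using pair sq_minus_1_pos[OF palintiple_multiplier_gt_1[OF P]]
    by (metis mult_eq_0_iff of_nat_0 of_nat_0_less_iff less_irrefl neq0_conv)
  show "c < n"
    unfolding c_def by (rule palintiple_carry_less[OF P])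
qed

lemma carry_mirror_step:
  assumes Q: "palintiple n b q" and c: "0 < c" "c < n"
    and dvd_c: "(int n ^ 2 - 1) dvd (int b - int n) * int c"
    and j: "j \<le> topidx b q"
    and mirror: "carry n b q (Suc (topidx b q - j)) = carry n b q j"
    and dvd_j: "(int n ^ 2 - 1) dvd (int b - int n) * int (carry n b q j)"
  shows "carry n b q (Suc j) = carry n b q (topidx b q - j)
    \<and> (int n ^ 2 - 1) dvd (int b - int n) * int (carry n b q (Suc j))"
proof -
  let ?k = "topidx b q"
  let ?N = "int n ^ 2 - 1"
  let ?a = "int (carry n b q j)"
  have "int b * int (carry n b q (Suc j)) - int n * int (carry n b q (?k - j))
      = ?N * int (digit b q j) - int n * ((int b - int n) * ?a) - ?N * ?a"
    using palintiple_carry_pair_eq[OF Q j] mirror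
    by (simp add: algebra_simps power2_eq_square)
  also have "?N dvd \<dots>"
    using dvd_j by simp
  finally have dvd_next: "?N dvd int b * int (carry n b q (Suc j)) - int n * int (carry n b q (?k - j))" .
  have "carry n b q (Suc j) < n" "carry n b q (?k - j) < n"
    using palintiple_carry_less[OF Q] by auto
  then have "int (carry n b q (Suc j)) = int (carry n b q (?k - j))"
    using c by (intro eq_if_sq_minus_1_dvd[OF dvd_c dvd_next]) simp_all
  then have "carry n b q (Suc j) = carry n b q (?k - j)"
    by simp
  moreover from this have "?N dvd (int b - int n) * int (carry n b q (Suc j))"
    using dvd_next by (simp add: algebra_simps)
  ultimately show ?thesis
    by blast
qed

lemma shifted_symmetric_pal_if_sq_minus_1_dvd:
  assumes Q: "palintiple n b q" and c: "0 < c" "c < n"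
    and dvd_c: "(int n ^ 2 - 1) dvd (int b - int n) * int c"
  shows "shifted_symmetric_pal n b q"
proof -
  let ?k = "topidx b q"
  have mirror_all: "carry n b q j = carry n b q (Suc ?k - j)
      \<and> (int n ^ 2 - 1) dvd (int b - int n) * int (carry n b q j)"
    if "j \<le> Suc ?k" for j
    using that
  proof (induction j)
    case 0
    then show ?case
      using palintiple_carry_Suc_topidx[OF Q] by simp
  next
    case (Suc j)
    then have j: "j \<le> ?k"
      by simp
    have IH: "carry n b q j = carry n b q (Suc ?k - j)
        \<and> (int n ^ 2 - 1) dvd (int b - int n) * int (carry n b q j)"
      using Suc.IH[OF le_SucI[OF j]] .
    then have "carry n b q (Suc (?k - j)) = carry n b q j"
      using j by (simp add: Suc_diff_le)
    with IH show ?case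
      using carry_mirror_step[OF Q c dvd_c j] by (metis diff_Suc_Suc)
  qed
  show ?thesis
    unfolding shifted_symmetric_pal_def
  proof (intro allI impI)
    fix j
    assume "j \<le> ?k"
    then show "carry n b q j = carry n b q (?k - j + 1)"
      using mirror_all[of j] by (simp add: Suc_diff_le)
  qed
qed

theorem corollary3:
  assumes hyp: "\<forall>b n p. 2 < b \<and> 1 < n \<and> n < b \<and> palintiple n b p \<and> symmetric_pal n b p
      \<longrightarrow> (\<forall>j\<le>topidx b p. [carry n b p j = 0] (mod (n - 1)))"
    and b: "2 < (b::nat)" and n1: "1 < (n::nat)" and nb: "n < b"
    and p: "palintiple n b p" and q: "palintiple n b q"
  shows "(symmetric_pal n b p \<and> symmetric_pal n b q)
       \<or> (shifted_symmetric_pal n b p \<and> shifted_symmetric_pal n b q)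
       \<or> (asymmetric_pal n b p \<and> asymmetric_pal n b q)"
proof (cases "(n + 1) dvd b")
  case True
  then show ?thesis
    using symmetric_pal_if_dvd p q by blast
next
  case not_dvd: False
  have not_symmetric: "\<not> symmetric_pal n b r" if r: "palintiple n b r" for r
  proof
    assume S: "symmetric_pal n b r"
    then have "b = (n + 1) * digit b r 0"
      using hyp[rule_format, of b n r] b n1 nb r by (intro b_eq_if_symmetric_pal) auto
    with not_dvd show False
      by (metis dvd_triv_left)
  qed
  show ?thesis
  proof (cases "shifted_symmetric_pal n b p \<or> shifted_symmetric_pal n b q")
    case True
    then obtain r where "palintiple n b r" "shifted_symmetric_pal n b r"
      using p q by blast
    then obtain c where "0 < c" "c < n" "(int n ^ 2 - 1) dvd (int b - int n) * int c"
      by (rule sq_minus_1_dvd_if_shifted_symmetric_pal)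
    then show ?thesis
      using shifted_symmetric_pal_if_sq_minus_1_dvd p q by blast
  next
    case False
    then show ?thesis
      using not_symmetric p q unfolding asymmetric_pal_def by blast
  qed
qed

end
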